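(* For $B',B\in\mathcal X_{N-2}$ such that $B'\preceq B$ we have $\varphi(B')\le\varphi(B)$.
   Context: Let $N\ge 3$ be an odd integer and $F=\mathbb Z/2\mathbb Z$. For integers $i,j$ let $[i,j]=\{h\in\mathbb Z: i\le h\le j\}$ (empty if $i>j$). Let $S_N=[1,N]$. The set of all subsets of $S_N$ is an $F$-vector space with sum $X+X'=(X\cup X')-(X\cap X')$; let $E_N$ be the subspace of subsets of even cardinality. A $2$-element subset $\{i,j\}\subseteq S_N$ is written $ij$ when either ($i<j$ and $j-i$ odd) or ($i>j$ and $i-j$ even); each $2$-element subset has exactly one such writing. Let $\mathcal P_N$ be the set of all finite sets $B$ of pairwise disjoint $2$-element subsets of $S_N$; for $B\in\mathcal P_N$ let $\langle B\rangle$ be the $F$-subspace of $E_N$ spanned by the elements of $B$, $\mathrm{supp}(B)=\bigcup_{X\in B}X$, $B^0=\{\{i,j\}\in B: i-j\text{ even}\}$, $B^1=\{\{i,j\}\in B: i-j\text{ odd}\}$. A set $X\subseteq S_N$ is $0$-covered (resp. $1$-covered) by $B^1$ if there are $a_1b_1,\dots,a_sb_s\in B^1$ ($s\ge 0$, so $a_r<b_r$) with $X=[a_1,b_1]\sqcup\dots\sqcup[a_s,b_s]$ (resp. $X=[a_1,b_1]\sqcup\dots\sqcup[a_s,b_s]\sqcup\{u\}$ for some $u$), disjoint unions. Let ${}^*\mathcal P_N$ be the set of $B\in\mathcal P_N$ such that: for every $ij\in B^1$ the set $[i+1,j-1]$ is $0$-covered by $B^1$; and there is a sequence $i_*(B)=(i_1,\dots,i_{2s})$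 in $S_N$ with $B^0=\{i_{2s}i_1,i_{2s-1}i_2,\dots,i_{s+1}i_s\}$ (so $s=|B^0|$; the sequence is unique) such that, if $s\ge1$, each of $[i_1+1,i_2-1],\dots,[i_{s-1}+1,i_s-1],[i_{s+1}+1,i_{s+2}-1],\dots,[i_{2s-1}+1,i_{2s}-1]$ is $0$-covered by $B^1$. For $B\in{}^*\mathcal P_N$ with $i_*(B)=(i_1,\dots,i_{2s})$ consider: (I) $s=0$, or $s\ge1$ and $[1,i_1-1]$ and $[i_{2s}+1,N]$ are $0$-covered by $B^1$; (II) $N\notin\mathrm{supp}(B)$ and either $s=0$, or $s$ is odd and either (i) $[1,i_1-1]$ is $1$-covered and $[i_{2s}+1,N-1]$ is $0$-covered by $B^1$, or (ii) $[1,i_1-1]$ is $0$-covered and $[i_{2s}+1,N-1]$ is $1$-covered by $B^1$; (III) (I) holds and, if $s$ is even then $\{i,N\}\in B$ for some even $i$, if $s$ is odd then $\{i,N\}\in B$ for some odd $i$. Let $\mathcal X_{N-1}$, $\mathcal X^+_{N-2}$, $\mathcal X^-_{N-2}$ be the sets of $B\in{}^*\mathcal P_N$ satisfying (I), (II), (III) respectively, and $\mathcal X_{N-2}=\mathcal X^+_{N-2}\sqcup\mathcal X^-_{N-2}$. For $B\in\mathcal X^+_{N-2}$ with $s\ge1$ there is a unique $u_B$: in case (i), $u_B\in[1,i_1-1]$ with $[1,u_B-1]$, $[u_B+1,i_1-1]$ $0$-covered by $B^1$ ($u_B$ odd); in case (ii), $u_B\in[i_{2s}+1,N-1]$ with $[i_{2s}+1,u_B-1]$,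 $[u_B+1,N-1]$ $0$-covered by $B^1$ ($u_B$ even). Put $[[ij]]=[i,j]$ if $i<j$ and $[[ij]]=[i,N]\cup[1,j]$ if $i>j$. For $B\in\mathcal X_{N-1}$ let $\epsilon(B)=\sum_{ij\in B}[[ij]]\in E_N$. For $B\in\mathcal X_{N-2}$ define ${}'\epsilon(B)\in E_N$: ${}'\epsilon(B)=\sum_{ij\in B}[[ij]]$ if $B\in\mathcal X^-_{N-2}$ or if $B\in\mathcal X^+_{N-2}$ with $|B^0|=0$; ${}'\epsilon(B)=\sum_{ij\in B}[[ij]]+[u_B,N]$ if $B\in\mathcal X^+_{N-2}$, $|B^0|$ odd, $u_B$ even; ${}'\epsilon(B)=\sum_{ij\in B}[[ij]]+\{N\}+[1,u_B]$ if $B\in\mathcal X^+_{N-2}$, $|B^0|$ odd, $u_B$ odd. The map $\varphi:\mathcal X_{N-2}\to\mathcal X_{N-1}$ (a bijection) is given by $\varphi(B)=B$ if $B\in\mathcal X^-_{N-2}$ or if $B\in\mathcal X^+_{N-2}$ with $|B^0|=0$, and $\varphi(B)=B\sqcup\{\{u_B,N\}\}$ if $B\in\mathcal X^+_{N-2}$ with $|B^0|>0$. For $B,B'\in\mathcal X_{N-2}$ write $B'\preceq B$ if there is a sequence $B'=B_0,\dots,B_h=B$ ($h\ge0$) in $\mathcal X_{N-2}$ with ${}'\epsilon(B_k)\in\langle B_{k+1}\rangle$ for $k=0,\dots,h-1$. For $B,B'\in\mathcal X_{N-1}$ write $B'\le B$ if there is a sequence $B'=B_0,\dots,B_h=B$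 ($h\ge0$) in $\mathcal X_{N-1}$ with $\epsilon(B_k)\in\langle B_{k+1}\rangle$ for $k=0,\dots,h-1$. *)

theory Defs
  imports Main
begin

text \<open>Sum in the F_2-vector space of subsets: symmetric difference.\<close>
definition sdiff2 :: "nat set \<Rightarrow> nat set \<Rightarrow> nat set" where
  "sdiff2 X Y = (X - Y) \<union> (Y - X)"

text \<open>Finite sum over F_2 of the family f indexed by the finite set C.\<close>
definition fsum2 :: "('a \<Rightarrow> nat set) \<Rightarrow> 'a set \<Rightarrow> nat set" where
  "fsum2 f C = {x. odd (card {p \<in> C. x \<in> f p})}"

definition span2 :: "nat set set \<Rightarrow> nat set set" where
  "span2 B = {fsum2 id C | C. C \<subseteq> B}"

definition PN :: "nat \<Rightarrow> nat set set \<Rightarrow> bool" where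
  "PN N B \<longleftrightarrow> (\<forall>p\<in>B. p \<subseteq> {1..N} \<and> card p = 2) \<and>
     (\<forall>p\<in>B. \<forall>q\<in>B. p \<noteq> q \<longrightarrow> p \<inter> q = {})"

definition supp :: "nat set set \<Rightarrow> nat set" where
  "supp B = \<Union>B"

definition B0 :: "nat set set \<Rightarrow> nat set set" where
  "B0 B = {p \<in> B. even (Max p - Min p)}"

definition B1 :: "nat set set \<Rightarrow> nat set set" where
  "B1 B = {p \<in> B. odd (Max p - Min p)}"

definition ival :: "nat set \<Rightarrow> nat set" where
  "ival p = {Min p..Max p}"

definition cov0 :: "nat set set \<Rightarrow> nat set \<Rightarrow> bool" where
  "cov0 B X \<longleftrightarrow> (\<exists>C \<subseteq> B1 B.
     (\<forall>p\<in>C. \<forall>q\<in>C. p \<noteq> q \<longrightarrow> ival p \<inter> ival q = {}) \<and> X = \<Union>(ival ` C))"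

definition cov1 :: "nat set set \<Rightarrow> nat set \<Rightarrow> bool" where
  "cov1 B X \<longleftrightarrow> (\<exists>C \<subseteq> B1 B. \<exists>u.
     (\<forall>p\<in>C. \<forall>q\<in>C. p \<noteq> q \<longrightarrow> ival p \<inter> ival q = {}) \<and>
     u \<notin> \<Union>(ival ` C) \<and> X = insert u (\<Union>(ival ` C)))"

text \<open>The sequence i_*(B) = (i_1,...,i_{2s}) as a 0-indexed list is; entry i_k is is!(k-1).
  B^0 = {i_{2s} i_1, ..., i_{s+1} i_s}; the sequence is taken strictly increasing.\<close>
definition seq_ok :: "nat \<Rightarrow> nat set set \<Rightarrow> nat list \<Rightarrow> bool" where
  "seq_ok N B is \<longleftrightarrow> even (length is) \<and> sorted_wrt (<) is \<and> set is \<subseteq> {1..N} \<and>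
     B0 B = {{is ! (length is - 1 - k), is ! k} | k. k < length is div 2} \<and>
     (\<forall>k. k + 1 < length is div 2 \<longrightarrow> cov0 B {is ! k + 1 .. is ! (k + 1) - 1}) \<and>
     (\<forall>k. length is div 2 \<le> k \<and> k + 1 < length is \<longrightarrow>
          cov0 B {is ! k + 1 .. is ! (k + 1) - 1})"

definition istar :: "nat \<Rightarrow> nat set set \<Rightarrow> nat list" where
  "istar N B = (THE is. seq_ok N B is)"

definition starP :: "nat \<Rightarrow> nat set set \<Rightarrow> bool" where
  "starP N B \<longleftrightarrow> PN N B \<and> (\<forall>p\<in>B1 B. cov0 B {Min p + 1 .. Max p - 1}) \<and>
     (\<exists>is. seq_ok N B is)"

abbreviation sB :: "nat \<Rightarrow> nat set set \<Rightarrow> nat" where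
  "sB N B \<equiv> length (istar N B) div 2"

abbreviation ifirst :: "nat \<Rightarrow> nat set set \<Rightarrow> nat" where
  "ifirst N B \<equiv> hd (istar N B)"

abbreviation ilast :: "nat \<Rightarrow> nat set set \<Rightarrow> nat" where
  "ilast N B \<equiv> last (istar N B)"

definition condI :: "nat \<Rightarrow> nat set set \<Rightarrow> bool" where
  "condI N B \<longleftrightarrow> sB N B = 0 \<or>
     (cov0 B {1 .. ifirst N B - 1} \<and> cov0 B {ilast N B + 1 .. N})"

definition caseI :: "nat \<Rightarrow> nat set set \<Rightarrow> bool" where
  "caseI N B \<longleftrightarrow> cov1 B {1 .. ifirst N B - 1} \<and> cov0 B {ilast N B + 1 .. N - 1}"

definition caseII :: "nat \<Rightarrow> nat set set \<Rightarrow> bool" where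
  "caseII N B \<longleftrightarrow> cov0 B {1 .. ifirst N B - 1} \<and> cov1 B {ilast N B + 1 .. N - 1}"

definition condII :: "nat \<Rightarrow> nat set set \<Rightarrow> bool" where
  "condII N B \<longleftrightarrow> N \<notin> supp B \<and>
     (sB N B = 0 \<or> (odd (sB N B) \<and> (caseI N B \<or> caseII N B)))"

definition condIII :: "nat \<Rightarrow> nat set set \<Rightarrow> bool" where
  "condIII N B \<longleftrightarrow> condI N B \<and>
     (even (sB N B) \<longrightarrow> (\<exists>i. even i \<and> {i, N} \<in> B)) \<and>
     (odd (sB N B) \<longrightarrow> (\<exists>i. odd i \<and> {i, N} \<in> B))"

definition XN1 :: "nat \<Rightarrow> nat set set set" where
  "XN1 N = {B. starP N B \<and> condI N B}"

definition XN2p :: "nat \<Rightarrow> nat set set set" where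
  "XN2p N = {B. starP N B \<and> condII N B}"

definition XN2m :: "nat \<Rightarrow> nat set set set" where
  "XN2m N = {B. starP N B \<and> condIII N B}"

definition XN2 :: "nat \<Rightarrow> nat set set set" where
  "XN2 N = XN2p N \<union> XN2m N"

definition uB :: "nat \<Rightarrow> nat set set \<Rightarrow> nat" where
  "uB N B = (if caseI N B then
       (THE u. u \<in> {1 .. ifirst N B - 1} \<and> cov0 B {1 .. u - 1} \<and>
               cov0 B {u + 1 .. ifirst N B - 1})
     else
       (THE u. u \<in> {ilast N B + 1 .. N - 1} \<and> cov0 B {ilast N B + 1 .. u - 1} \<and>
               cov0 B {u + 1 .. N - 1}))"

definition brk :: "nat \<Rightarrow> nat set \<Rightarrow> nat set" where
  "brk N p = (if odd (Max p - Min p) then {Min p .. Max p}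
              else {Max p .. N} \<union> {1 .. Min p})"

definition eps :: "nat \<Rightarrow> nat set set \<Rightarrow> nat set" where
  "eps N B = fsum2 (brk N) B"

definition eps' :: "nat \<Rightarrow> nat set set \<Rightarrow> nat set" where
  "eps' N B = (if B \<in> XN2m N \<or> card (B0 B) = 0 then eps N B
     else if even (uB N B) then sdiff2 (eps N B) {uB N B .. N}
     else sdiff2 (sdiff2 (eps N B) {N}) {1 .. uB N B})"

definition phi :: "nat \<Rightarrow> nat set set \<Rightarrow> nat set set" where
  "phi N B = (if B \<in> XN2m N \<or> card (B0 B) = 0 then B else insert {uB N B, N} B)"

definition preceq :: "nat \<Rightarrow> nat set set \<Rightarrow> nat set set \<Rightarrow> bool" where
  "preceq N B' B \<longleftrightarrow>
     (\<lambda>X Y. X \<in> XN2 N \<and> Y \<in> XN2 N \<and> eps' N X \<in> span2 Y)\<^sup>*\<^sup>* B' B"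

definition leq1 :: "nat \<Rightarrow> nat set set \<Rightarrow> nat set set \<Rightarrow> bool" where
  "leq1 N B' B \<longleftrightarrow>
     (\<lambda>X Y. X \<in> XN1 N \<and> Y \<in> XN1 N \<and> eps N X \<in> span2 Y)\<^sup>*\<^sup>* B' B"

end

theory Submission
  imports Defs
begin

(*
  For every B in X_{N-2} we show phi(B) in X_{N-1}, eps(phi(B)) = 'eps(B) and B <= phi(B),
  hence <B> <= <phi(B)>; so phi maps every step of a chain for the first order to a step
  of a chain for the second. The only nontrivial case is B in X^+_{N-2} with s odd, where
  phi adds the pair {u_B, N}, and [[u_B N]] is exactly the correction term of 'eps(B).
  The intervals next to u_B are 0-covered, hence of even size; this fixes the parity of u_B,
  so that in case (i) the new pair is a B^0-pair wrapped around i_*(B), and in case (ii) a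
  B^1-pair completing the 0-cover of [i_{2s} + 1, N]. That u_B is not yet used by B holds
  because no B^1-pair straddles a point of supp B^0, its interior being covered by B^1-pairs.
*)

lemma rtranclp_map:
  assumes "\<And>x y. R x y \<Longrightarrow> S (f x) (f y)" and "R\<^sup>*\<^sup>* a b"
  shows "S\<^sup>*\<^sup>* (f a) (f b)"
  using assms(2) by induction (auto intro: rtranclp.rtrancl_into_rtrancl assms(1))

lemma sorted_hd_le: "sorted xs \<Longrightarrow> x \<in> set xs \<Longrightarrow> hd xs \<le> x"
  by (cases xs) auto

lemma sorted_le_last: "sorted xs \<Longrightarrow> x \<in> set xs \<Longrightarrow> x \<le> last xs"
  by (induction xs) (auto simp: last_in_set)

lemma fsum2_insert:
  assumes "finite C" "p \<notin> C"
  shows "fsum2 f (insert p C) = sdiff2 (fsum2 f C) (f p)"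
proof -
  have "odd (card {q \<in> insert p C. x \<in> f q}) \<longleftrightarrow> odd (card {q \<in> C. x \<in> f q}) \<noteq> (x \<in> f p)"
    for x
  proof -
    have "{q \<in> insert p C. x \<in> f q} =
          (if x \<in> f p then insert p {q \<in> C. x \<in> f q} else {q \<in> C. x \<in> f q})"
      by auto
    then show ?thesis using assms by simp
  qed
  then show ?thesis unfolding fsum2_def sdiff2_def by auto
qed

lemma span2_mono: "B \<subseteq> B' \<Longrightarrow> span2 B \<subseteq> span2 B'"
  unfolding span2_def by blast

lemma PN_finite: "PN N B \<Longrightarrow> finite B"
  unfolding PN_def by (rule finite_subset[of B "Pow {1..N}"]) auto

lemma PN_pair:
  assumes "PN N B" "p \<in> B"
  shows "x \<in> p \<longleftrightarrow> x = Min p \<or> x = Max p" "Min p < Max p" "1 \<le> Min p" "Max p \<le> N"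
proof -
  have "card p = 2" and p: "p \<subseteq> {1..N}" using assms unfolding PN_def by auto
  then obtain a b where "p = {a, b}" "a \<noteq> b" by (auto simp: card_2_iff)
  then have "p = {min a b, max a b}" "min a b < max a b" by (auto simp: min_def max_def)
  then show "x \<in> p \<longleftrightarrow> x = Min p \<or> x = Max p" "Min p < Max p" "1 \<le> Min p" "Max p \<le> N"
    using p by auto
qed

lemma PN_disjoint: "PN N B \<Longrightarrow> p \<in> B \<Longrightarrow> q \<in> B \<Longrightarrow> x \<in> p \<Longrightarrow> x \<in> q \<Longrightarrow> p = q"
  unfolding PN_def by blast

lemma PN_insert:
  assumes "PN N B" "1 \<le> u" "u < N" "u \<notin> supp B" "N \<notin> supp B"
  shows "PN N (insert {u, N} B)"
proof -
  have "\<forall>q\<in>B. {u, N} \<inter> q = {} \<and> q \<inter> {u, N} = {}"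
    using assms(4,5) unfolding supp_def by blast
  then show ?thesis using assms(1-3) unfolding PN_def by auto
qed

lemma B0_B1_disjoint:
  assumes "PN N B" "p \<in> B0 B" "q \<in> B1 B"
  shows "p \<inter> q = {}"
proof -
  have "p \<in> B" "q \<in> B" "p \<noteq> q" using assms(2,3) unfolding B0_def B1_def by auto
  then show ?thesis using assms(1) unfolding PN_def by blast
qed

lemma card_B0_eq_0_iff: "PN N B \<Longrightarrow> card (B0 B) = 0 \<longleftrightarrow> B0 B = {}"
  using PN_finite[of N B] unfolding B0_def by simp

section \<open>Covers by intervals of \<open>B\<^sup>1\<close>\<close>

definition nested :: "nat set set \<Rightarrow> bool" where
  "nested B \<longleftrightarrow> (\<forall>p\<in>B1 B. cov0 B {Min p + 1 .. Max p - 1})"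

lemma starP_iff: "starP N B \<longleftrightarrow> PN N B \<and> nested B \<and> (\<exists>is. seq_ok N B is)"
  unfolding starP_def nested_def ..

lemma cov0_mono:
  assumes "B \<subseteq> B'" "cov0 B X"
  shows "cov0 B' X"
proof -
  obtain C where "C \<subseteq> B1 B" "\<forall>p\<in>C. \<forall>q\<in>C. p \<noteq> q \<longrightarrow> ival p \<inter> ival q = {}"
    "X = \<Union>(ival ` C)"
    using assms(2) unfolding cov0_def by blast
  moreover have "B1 B \<subseteq> B1 B'" using assms(1) unfolding B1_def by auto
  ultimately show ?thesis unfolding cov0_def by (intro exI[of _ C]) auto
qed

lemma cov0_empty: "cov0 B {}"
  unfolding cov0_def by (rule exI[of _ "{}"]) auto

lemma cov0_ival: "p \<in> B1 B \<Longrightarrow> cov0 B (ival p)"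
  unfolding cov0_def by (rule exI[of _ "{p}"]) auto

lemma cov0_UN:
  "C \<subseteq> B1 B \<Longrightarrow> \<forall>p\<in>C. \<forall>q\<in>C. p \<noteq> q \<longrightarrow> ival p \<inter> ival q = {} \<Longrightarrow> cov0 B (\<Union>(ival ` C))"
  unfolding cov0_def by blast

lemma cov0_Un:
  assumes "cov0 B X" "cov0 B Y" "X \<inter> Y = {}"
  shows "cov0 B (X \<union> Y)"
proof -
  obtain C1 where C1: "C1 \<subseteq> B1 B" "\<forall>p\<in>C1. \<forall>q\<in>C1. p \<noteq> q \<longrightarrow> ival p \<inter> ival q = {}"
    "X = \<Union>(ival ` C1)"
    using assms(1) unfolding cov0_def by blast
  obtain C2 where C2: "C2 \<subseteq> B1 B" "\<forall>p\<in>C2. \<forall>q\<in>C2. p \<noteq> q \<longrightarrow> ival p \<inter> ival q = {}"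
    "Y = \<Union>(ival ` C2)"
    using assms(2) unfolding cov0_def by blast
  have "ival p \<inter> ival q = {}" if "p \<in> C1 \<union> C2" "q \<in> C1 \<union> C2" "p \<noteq> q" for p q
  proof (cases "p \<in> C1 \<and> q \<in> C1 \<or> p \<in> C2 \<and> q \<in> C2")
    case True
    then show ?thesis using C1(2) C2(2) that(3) by blast
  next
    case False
    then have "ival p \<subseteq> X \<and> ival q \<subseteq> Y \<or> ival p \<subseteq> Y \<and> ival q \<subseteq> X"
      using that(1,2) C1(3) C2(3) by blast
    then show ?thesis using assms(3) by blast
  qed
  then show ?thesis
    unfolding cov0_def using C1 C2 by (intro exI[of _ "C1 \<union> C2"]) auto
qed

lemma cov0_even_card:
  assumes "finite B" "cov0 B X"
  shows "even (card X)"
proof -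
  obtain C where C: "C \<subseteq> B1 B" "\<forall>p\<in>C. \<forall>q\<in>C. p \<noteq> q \<longrightarrow> ival p \<inter> ival q = {}"
    "X = \<Union>(ival ` C)"
    using assms(2) unfolding cov0_def by blast
  have "finite C" using C(1) assms(1) unfolding B1_def by (auto intro: finite_subset)
  then have "card X = (\<Sum>p\<in>C. card (ival p))"
    using C by (simp add: card_UN_disjoint ival_def)
  moreover have "even (card (ival p))" if "p \<in> C" for p
  proof -
    have "odd (Max p - Min p)" using that C(1) unfolding B1_def by auto
    then show ?thesis unfolding ival_def by (simp add: Suc_diff_le)
  qed
  ultimately show ?thesis by (simp add: dvd_sum)
qed

lemma cov0_covered:
  assumes "PN N B" "nested B" "cov0 B {x..y}" "z \<in> {x..y}"
  shows "\<exists>r\<in>B1 B. z \<in> r \<and> r \<subseteq> {x..y}"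
  using assms(3,4)
proof (induction "y - x" arbitrary: x y rule: less_induct)
  case less
  obtain C where C: "C \<subseteq> B1 B" and xy: "{x..y} = \<Union>(ival ` C)"
    using less.prems(1) unfolding cov0_def by auto
  from less.prems(2) obtain p where "p \<in> C" "z \<in> ival p" unfolding xy by blast
  then have p: "p \<in> B1 B" "z \<in> ival p" "ival p \<subseteq> {x..y}" using C unfolding xy by auto
  have pair: "Min p < Max p" "\<And>w. w \<in> p \<longleftrightarrow> w = Min p \<or> w = Max p"
    using PN_pair[OF assms(1)] p(1) unfolding B1_def by auto
  have ival_sub: "x \<le> Min p" "Max p \<le> y"
    using p(3) pair(1) unfolding ival_def by auto
  show ?case
  proof (cases "z \<in> p")
    case True
    have "p \<subseteq> {x..y}" using pair ival_sub by auto
    then show ?thesis using True p(1) by blast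
  next
    case False
    then have "z \<noteq> Min p" "z \<noteq> Max p" using pair(2) by auto
    then have z: "z \<in> {Min p + 1 .. Max p - 1}" using p(2) unfolding ival_def by auto
    have "cov0 B {Min p + 1 .. Max p - 1}" using assms(2) p(1) unfolding nested_def by blast
    moreover have "(Max p - 1) - (Min p + 1) < y - x" using z ival_sub by auto
    ultimately obtain r where "r \<in> B1 B" "z \<in> r" "r \<subseteq> {Min p + 1 .. Max p - 1}"
      using less.hyps z by blast
    moreover have "{Min p + 1 .. Max p - 1} \<subseteq> {x..y}" using ival_sub by auto
    ultimately show ?thesis by blast
  qed
qed

lemma cov0_closed:
  assumes "PN N B" "nested B" "cov0 B {x..y}" "z \<in> {x..y}" "p \<in> B" "z \<in> p"
  shows "p \<subseteq> {x..y}"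
proof -
  obtain r where "r \<in> B1 B" "z \<in> r" "r \<subseteq> {x..y}"
    using cov0_covered[OF assms(1-4)] by blast
  moreover from this have "r = p" using PN_disjoint[OF assms(1)] assms(5,6) unfolding B1_def by blast
  ultimately show ?thesis by simp
qed

lemma ival_meets_B0_imp_B0:
  assumes "PN N B" "nested B" "p \<in> B" "w \<in> \<Union>(B0 B)" "w \<in> ival p"
  shows "p \<in> B0 B"
proof (rule ccontr)
  assume "p \<notin> B0 B"
  then have p: "p \<in> B1 B" using assms(3) unfolding B0_def B1_def by auto
  obtain P where P: "P \<in> B0 B" "w \<in> P" using assms(4) by blast
  have "\<exists>r\<in>B1 B. w \<in> r"
  proof (cases "w \<in> p")
    case False
    then have "w \<in> {Min p + 1 .. Max p - 1}"
      using assms(5) PN_pair(1)[OF assms(1,3)] unfolding ival_def by (auto simp: le_less)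
    moreover have "cov0 B {Min p + 1 .. Max p - 1}" using assms(2) p unfolding nested_def by blast
    ultimately show ?thesis using cov0_covered[OF assms(1,2)] by blast
  qed (use p in blast)
  then show False using B0_B1_disjoint[OF assms(1) P(1)] P(2) by blast
qed

(* The uncovered point u of a 1-cover of [x, y]; used with x \<ge> 1, so that u - 1 does not truncate. *)
definition split_point :: "nat set set \<Rightarrow> nat \<Rightarrow> nat \<Rightarrow> nat \<Rightarrow> bool" where
  "split_point B x y u \<longleftrightarrow> u \<in> {x..y} \<and> cov0 B {x..u - 1} \<and> cov0 B {u + 1..y}"

lemma cov1_split_point:
  assumes "cov1 B {x..y}" "1 \<le> x"
  obtains u where "split_point B x y u"
proof -
  obtain C u where C: "C \<subseteq> B1 B" and disj: "\<forall>p\<in>C. \<forall>q\<in>C. p \<noteq> q \<longrightarrow> ival p \<inter> ival q = {}"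
    and u: "u \<notin> \<Union>(ival ` C)" and xy: "{x..y} = insert u (\<Union>(ival ` C))"
    using assms(1) unfolding cov1_def by auto
  have u_in: "u \<in> {x..y}" unfolding xy by blast
  have UC: "\<Union>(ival ` C) = {x..y} - {u}" using xy u by blast
  have side: "Max p < u \<or> u < Min p" if "p \<in> C" for p
    using u that unfolding ival_def by force
  have below: "z < u \<longleftrightarrow> Max p < u" and above: "u < z \<longleftrightarrow> u < Min p"
    if "p \<in> C" "z \<in> ival p" for p z
    using side[OF that(1)] that(2) unfolding ival_def by auto
  have "\<Union>(ival ` {p\<in>C. Max p < u}) = {z \<in> \<Union>(ival ` C). z < u}"
    using below by blast
  also have "\<dots> = {x..u - 1}"
    using u_in assms(2) unfolding UC by auto
  finally have "cov0 B {x..u - 1}"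
    using cov0_UN[of "{p\<in>C. Max p < u}" B] C disj by auto
  have "\<Union>(ival ` {p\<in>C. u < Min p}) = {z \<in> \<Union>(ival ` C). u < z}"
    using above by blast
  also have "\<dots> = {u + 1..y}"
    using u_in unfolding UC by auto
  finally have "cov0 B {u + 1..y}"
    using cov0_UN[of "{p\<in>C. u < Min p}" B] C disj by auto
  then show ?thesis using that u_in \<open>cov0 B {x..u - 1}\<close> unfolding split_point_def by blast
qed

lemma split_point_unique:
  assumes "PN N B" "nested B" "split_point B x y u" "split_point B x y v" "u \<notin> supp B" "v \<notin> supp B"
  shows "u = v"
proof -
  have "\<not> u < v" if "split_point B x y u" "split_point B x y v" "u \<notin> supp B" for u v
  proof
    assume "u < v"
    then have "u \<in> {x..v - 1}" using that(1) unfolding split_point_def by auto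
    moreover have "cov0 B {x..v - 1}" using that(2) unfolding split_point_def by blast
    ultimately obtain r where "r \<in> B1 B" "u \<in> r" using cov0_covered[OF assms(1,2)] by blast
    then show False using that(3) unfolding supp_def B1_def by blast
  qed
  then show ?thesis using assms(3-6) by (meson linorder_neqE_nat)
qed

lemma pair_through_split_point:
  assumes "PN N B" "nested B" "split_point B x y u" "p \<in> B" "u \<in> p"
  shows "p \<inter> {x..y} = {u}"
proof -
  have "q = u" if q: "q \<in> p" "q \<in> {x..y}" for q
  proof (rule ccontr)
    assume "q \<noteq> u"
    then consider "q < u" | "u < q" by linarith
    then show False
    proof cases
      case 1
      then have "q \<in> {x..u - 1}" using q(2) by auto
      then have "p \<subseteq> {x..u - 1}"
        using assms(3) cov0_closed[OF assms(1,2) _ _ assms(4) q(1)] unfolding split_point_def by blast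
      then have "u \<in> {x..u - 1}" using assms(5) by blast
      then show False using 1 by auto
    next
      case 2
      then have "q \<in> {u + 1..y}" using q(2) by auto
      then have "p \<subseteq> {u + 1..y}"
        using assms(3) cov0_closed[OF assms(1,2) _ _ assms(4) q(1)] unfolding split_point_def by blast
      then have "u \<in> {u + 1..y}" using assms(5) by blast
      then show False by auto
    qed
  qed
  then show ?thesis using assms(3,5) unfolding split_point_def by blast
qed

lemma split_point_the:
  assumes "PN N B" "nested B" "cov1 B {x..y}" "1 \<le> x"
    and free: "\<And>u. split_point B x y u \<Longrightarrow> u \<notin> supp B"
  shows "split_point B x y (THE u. split_point B x y u)"
proof -
  obtain u where u: "split_point B x y u" using cov1_split_point[OF assms(3,4)] .
  then show ?thesis
    by (rule theI) (use split_point_unique[OF assms(1,2)] free u in blast)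
qed

section \<open>The sequence \<open>i\<^sub>*(B)\<close>\<close>

definition mirror_pairs :: "'a list \<Rightarrow> 'a set set" where
  "mirror_pairs xs = (\<lambda>k. {xs ! (length xs - 1 - k), xs ! k}) ` {..<length xs div 2}"

abbreviation gap :: "nat list \<Rightarrow> nat \<Rightarrow> nat set" where
  "gap xs k \<equiv> {xs ! k + 1 .. xs ! (k + 1) - 1}"

lemma seq_ok_iff:
  "seq_ok N B is \<longleftrightarrow> even (length is) \<and> sorted_wrt (<) is \<and> set is \<subseteq> {1..N} \<and>
     B0 B = mirror_pairs is \<and>
     (\<forall>k. k + 1 < length is div 2 \<longrightarrow> cov0 B (gap is k)) \<and>
     (\<forall>k. length is div 2 \<le> k \<and> k + 1 < length is \<longrightarrow> cov0 B (gap is k))"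
proof -
  have "{f k | k. k < n} = f ` {..<n}" for f :: "nat \<Rightarrow> nat set" and n by auto
  then show ?thesis unfolding seq_ok_def mirror_pairs_def by presburger
qed

lemma set_eq_Union_mirror_pairs:
  assumes "even (length xs)"
  shows "set xs = \<Union>(mirror_pairs xs)"
proof -
  let ?L = "length xs"
  have "xs ! i \<in> \<Union>(mirror_pairs xs)" if "i < ?L" for i
  proof (cases "i < ?L div 2")
    case True
    then show ?thesis unfolding mirror_pairs_def by blast
  next
    case False
    then have "?L - 1 - i < ?L div 2" "?L - 1 - (?L - 1 - i) = i" using that assms by auto
    then show ?thesis
      unfolding mirror_pairs_def by (metis (no_types, lifting) UnionI imageI insertI1 lessThan_iff)
  qed
  moreover have "\<Union>(mirror_pairs xs) \<subseteq> set xs" unfolding mirror_pairs_def by auto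
  ultimately show ?thesis by (auto simp: in_set_conv_nth)
qed

lemma mirror_pairs_wrap: "mirror_pairs (u # xs @ [v]) = insert {u, v} (mirror_pairs xs)"
proof -
  let ?ys = "u # xs @ [v]" and ?L = "length xs"
  let ?g = "\<lambda>k. {?ys ! (length ?ys - 1 - k), ?ys ! k}"
  have "mirror_pairs ?ys = insert (?g 0) ((?g \<circ> Suc) ` {..<?L div 2})"
    unfolding mirror_pairs_def by (simp add: lessThan_Suc_eq_insert_0 image_image)
  moreover have "?g 0 = {u, v}" by (simp add: nth_append insert_commute)
  moreover have "(?g \<circ> Suc) ` {..<?L div 2} = mirror_pairs xs"
    unfolding mirror_pairs_def by (rule image_cong) (auto simp: nth_append Suc_diff_Suc)
  ultimately show ?thesis by simp
qed

lemma gap_wrap: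
  assumes "xs \<noteq> []"
  shows "gap (u # xs @ [v]) 0 = {u + 1 .. hd xs - 1}"
    and "j + 1 < length xs \<Longrightarrow> gap (u # xs @ [v]) (Suc j) = gap xs j"
    and "gap (u # xs @ [v]) (length xs) = {last xs + 1 .. v - 1}"
  using assms by (auto simp: nth_append hd_conv_nth last_conv_nth)

lemma seq_ok_set: "seq_ok N B is \<Longrightarrow> set is = \<Union>(B0 B)"
  unfolding seq_ok_iff using set_eq_Union_mirror_pairs by metis

lemma istar_eq:
  assumes "seq_ok N B is"
  shows "istar N B = is"
  unfolding istar_def
proof (rule the_equality)
  fix js assume js: "seq_ok N B js"
  have "set js = set is" using seq_ok_set[OF js] seq_ok_set[OF assms] by simp
  moreover have "sorted js" "distinct js" "sorted is" "distinct is"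
    using js assms unfolding seq_ok_def strict_sorted_iff by auto
  ultimately show "js = is" using sorted_distinct_set_unique by blast
qed (rule assms)

lemma seq_ok_istar: "starP N B \<Longrightarrow> seq_ok N B (istar N B)"
  unfolding starP_def using istar_eq by metis

lemma sB_eq_0_iff:
  assumes "starP N B"
  shows "sB N B = 0 \<longleftrightarrow> B0 B = {}"
proof -
  have ok: "seq_ok N B (istar N B)" using seq_ok_istar[OF assms] .
  have "p \<noteq> {}" if "p \<in> B0 B" for p
    using that PN_pair(1)[of N B p "Min p"] assms unfolding starP_def B0_def by auto
  then have "B0 B = {} \<longleftrightarrow> set (istar N B) = {}" using seq_ok_set[OF ok] by auto
  moreover have "even (length (istar N B))" using ok unfolding seq_ok_def by blast
  ultimately show ?thesis by auto
qed

lemma seq_ok_bounds: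
  assumes "seq_ok N B is" "w \<in> \<Union>(B0 B)"
  shows "hd is \<le> w" "w \<le> last is"
  using assms seq_ok_set[OF assms(1)] sorted_hd_le sorted_le_last strict_sorted_iff
  unfolding seq_ok_def by metis+

lemma seq_ok_mono:
  assumes "seq_ok N B is" "B \<subseteq> B'" "B0 B' = B0 B"
  shows "seq_ok N B' is"
  using assms cov0_mono[OF assms(2)] unfolding seq_ok_def by auto

lemma seq_ok_wrap:
  assumes ok: "seq_ok N B is" and ne: "is \<noteq> []" and sub: "B \<subseteq> B'"
    and B0': "B0 B' = insert {u, v} (B0 B)"
    and uv: "1 \<le> u" "u < hd is" "last is < v" "v \<le> N"
    and gaps: "cov0 B' {u + 1 .. hd is - 1}" "cov0 B' {last is + 1 .. v - 1}"
  shows "seq_ok N B' (u # is @ [v])"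
proof -
  let ?L = "length is" and ?js = "u # is @ [v]"
  have ev: "even ?L" and so: "sorted_wrt (<) is" and rng: "set is \<subseteq> {1..N}"
    and B0: "B0 B = mirror_pairs is"
    and lower: "\<And>k. k + 1 < ?L div 2 \<Longrightarrow> cov0 B (gap is k)"
    and upper: "\<And>k. ?L div 2 \<le> k \<Longrightarrow> k + 1 < ?L \<Longrightarrow> cov0 B (gap is k)"
    using ok unfolding seq_ok_iff by auto
  have between: "u < x \<and> x < v" if "x \<in> set is" for x
    using that so uv sorted_hd_le[of "is" x] sorted_le_last[of "is" x]
    unfolding strict_sorted_iff by auto
  show ?thesis
    unfolding seq_ok_iff
  proof (intro conjI allI impI)
    show "even (length ?js)" using ev by simp
    have "u < v" using between[of "hd is"] ne by simp
    then show "sorted_wrt (<) ?js" using so between by (auto simp: sorted_wrt_append)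
    show "set ?js \<subseteq> {1..N}" using rng uv \<open>u < v\<close> by auto
    show "B0 B' = mirror_pairs ?js" unfolding mirror_pairs_wrap using B0' B0 by simp
  next
    fix k assume k: "k + 1 < length ?js div 2"
    show "cov0 B' (gap ?js k)"
    proof (cases k)
      case 0
      show ?thesis unfolding 0 gap_wrap(1)[OF ne] by (rule gaps(1))
    next
      case (Suc j)
      then have j: "j + 1 < ?L div 2" "j + 1 < ?L" using k ev by auto
      show ?thesis unfolding Suc gap_wrap(2)[OF ne j(2)] by (intro cov0_mono[OF sub lower] j(1))
    qed
  next
    fix k assume "length ?js div 2 \<le> k \<and> k + 1 < length ?js"
    then obtain j where j: "k = Suc j" "?L div 2 \<le> j" "j < ?L" by (cases k) auto
    then consider "j + 1 < ?L" | "Suc j = ?L" by linarith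
    then show "cov0 B' (gap ?js k)"
    proof cases
      case 1
      then show ?thesis
        unfolding j(1) gap_wrap(2)[OF ne 1] using j(2) by (intro cov0_mono[OF sub upper])
    next
      case 2
      show ?thesis unfolding j(1) 2 gap_wrap(3)[OF ne] by (rule gaps(2))
    qed
  qed
qed

section \<open>Adjoining the pair \<open>{u\<^sub>B, N}\<close>\<close>

(* A pair through u must leave [1, i_1 - 1] and hence straddle i_1, which only B^0-pairs can. *)
lemma caseI_split_point_notin_supp:
  assumes pn: "PN N B" and nest: "nested B" and ok: "seq_ok N B is" and ne: "is \<noteq> []"
    and u: "split_point B 1 (hd is - 1) u"
  shows "u \<notin> supp B"
proof
  assume "u \<in> supp B"
  then obtain p where p: "p \<in> B" "u \<in> p" unfolding supp_def by blast
  note pair = PN_pair[OF pn p(1)]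
  have meet: "p \<inter> {1..hd is - 1} = {u}" by (rule pair_through_split_point[OF pn nest u p])
  have "hd is \<le> Max p"
  proof (rule ccontr)
    assume "\<not> hd is \<le> Max p"
    then have "Min p \<in> p \<inter> {1..hd is - 1}" "Max p \<in> p \<inter> {1..hd is - 1}" using pair by auto
    then have "Min p = u" "Max p = u" using meet by blast+
    then show False using pair(2) by simp
  qed
  moreover have "Min p \<le> u" using p(2) pair(1,2) by auto
  ultimately have "hd is \<in> ival p" using u unfolding ival_def split_point_def by auto
  moreover have "hd is \<in> \<Union>(B0 B)" using seq_ok_set[OF ok] ne by auto
  ultimately have "p \<in> B0 B" using ival_meets_B0_imp_B0[OF pn nest p(1)] by blast
  then have "hd is \<le> u" using seq_ok_bounds(1)[OF ok] p(2) by blast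
  then show False using u unfolding split_point_def by auto
qed

lemma caseII_split_point_notin_supp:
  assumes pn: "PN N B" and nest: "nested B" and ok: "seq_ok N B is" and ne: "is \<noteq> []"
    and N: "N \<notin> supp B" and u: "split_point B (last is + 1) (N - 1) u"
  shows "u \<notin> supp B"
proof
  assume "u \<in> supp B"
  then obtain p where p: "p \<in> B" "u \<in> p" unfolding supp_def by blast
  note pair = PN_pair[OF pn p(1)]
  have meet: "p \<inter> {last is + 1..N - 1} = {u}" by (rule pair_through_split_point[OF pn nest u p])
  have "Max p \<noteq> N" using N p(1) pair(1) unfolding supp_def by blast
  have "Min p \<le> last is"
  proof (rule ccontr)
    assume "\<not> Min p \<le> last is"
    then have "Min p \<in> p \<inter> {last is + 1..N - 1}" "Max p \<in> p \<inter> {last is + 1..N - 1}"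
      using pair \<open>Max p \<noteq> N\<close> by auto
    then have "Min p = u" "Max p = u" using meet by blast+
    then show False using pair(2) by simp
  qed
  moreover have "u \<le> Max p" using p(2) pair(1,2) by auto
  ultimately have "last is \<in> ival p" using u unfolding ival_def split_point_def by auto
  moreover have "last is \<in> \<Union>(B0 B)" using seq_ok_set[OF ok] ne by auto
  ultimately have "p \<in> B0 B" using ival_meets_B0_imp_B0[OF pn nest p(1)] by blast
  then have "u \<le> last is" using seq_ok_bounds(2)[OF ok] p(2) by blast
  then show False using u unfolding split_point_def by auto
qed

lemma XN1_iff: "B \<in> XN1 N \<longleftrightarrow> PN N B \<and> nested B \<and> (\<exists>is. seq_ok N B is) \<and> condI N B"
  unfolding XN1_def starP_iff by simp

lemma caseI_extension:
  assumes "odd N" and pn: "PN N B" and nest: "nested B" and ok: "seq_ok N B is" and ne: "is \<noteq> []"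
    and N: "N \<notin> supp B" and u: "split_point B 1 (hd is - 1) u"
    and right: "cov0 B {last is + 1 .. N - 1}"
  shows "u < N" "insert {u, N} B \<in> XN1 N"
proof -
  define B' where "B' = insert {u, N} B"
  have sub: "B \<subseteq> B'" unfolding B'_def by blast
  have left: "1 \<le> u" "u < hd is" "cov0 B {1..u - 1}" "cov0 B {u + 1..hd is - 1}"
    using u unfolding split_point_def by auto
  have "last is \<in> \<Union>(B0 B)" "last is \<in> set is" using seq_ok_set[OF ok] ne by auto
  then have "last is < N"
    using ok N unfolding seq_ok_def supp_def B0_def by (auto simp: le_less)
  moreover have "hd is \<le> last is" using seq_ok_bounds(1)[OF ok \<open>last is \<in> \<Union>(B0 B)\<close>] .
  ultimately show uN: "u < N" using left(2) by linarith
  have "even (card {1..u - 1})" using cov0_even_card[OF PN_finite[OF pn] left(3)] .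
  \<comment> \<open>so u is odd and the new pair belongs to B^0\<close>
  then have "even (N - u)" using \<open>odd N\<close> left(1) uN by auto
  then have B0': "B0 B' = insert {u, N} (B0 B)" and B1': "B1 B' = B1 B"
    unfolding B'_def B0_def B1_def using uN by auto
  have "PN N B'"
    unfolding B'_def using PN_insert[OF pn left(1) uN caseI_split_point_notin_supp[OF pn nest ok ne u] N] .
  moreover have "nested B'" using nest cov0_mono[OF sub] unfolding nested_def B1' by blast
  moreover have ok': "seq_ok N B' (u # is @ [N])"
    using seq_ok_wrap[OF ok ne sub B0' left(1,2) \<open>last is < N\<close> order_refl]
      cov0_mono[OF sub left(4)] cov0_mono[OF sub right] by blast
  moreover have "condI N B'"
    unfolding condI_def istar_eq[OF ok'] using cov0_mono[OF sub left(3)] cov0_empty by simp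
  ultimately show "insert {u, N} B \<in> XN1 N" unfolding XN1_iff B'_def by blast
qed

lemma caseII_extension:
  assumes "odd N" and pn: "PN N B" and nest: "nested B" and ok: "seq_ok N B is" and ne: "is \<noteq> []"
    and N: "N \<notin> supp B" and left: "cov0 B {1 .. hd is - 1}"
    and u: "split_point B (last is + 1) (N - 1) u"
  shows "u < N" "insert {u, N} B \<in> XN1 N"
proof -
  define B' where "B' = insert {u, N} B"
  have sub: "B \<subseteq> B'" unfolding B'_def by blast
  have right: "last is < u" "u < N" "cov0 B {last is + 1..u - 1}" "cov0 B {u + 1..N - 1}"
    using u unfolding split_point_def by auto
  then show "u < N" by simp
  have "even (card {u + 1..N - 1})" using cov0_even_card[OF PN_finite[OF pn] right(4)] .
  \<comment> \<open>so u is even and the new pair belongs to B^1\<close>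
  then have "odd (N - u)" using \<open>odd N\<close> right(2) by auto
  then have B0': "B0 B' = B0 B" and B1': "B1 B' = insert {u, N} (B1 B)"
    unfolding B'_def B0_def B1_def using right(2) by auto
  have "PN N B'"
    unfolding B'_def using PN_insert[OF pn _ right(2) caseII_split_point_notin_supp[OF pn nest ok ne N u] N]
      right(1) by simp
  moreover have "nested B'"
    using nest cov0_mono[OF sub] cov0_mono[OF sub right(4)] right(2)
    unfolding nested_def B1' by auto
  moreover have ok': "seq_ok N B' is" using seq_ok_mono[OF ok sub B0'] .
  moreover have "cov0 B' {last is + 1..N}"
  proof -
    have "cov0 B' {u..N}"
      using cov0_ival[of "{u, N}" B'] right(2) unfolding B1' ival_def by simp
    then have "cov0 B' ({last is + 1..u - 1} \<union> {u..N})"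
      using cov0_Un[OF cov0_mono[OF sub right(3)]] by auto
    moreover have "{last is + 1..u - 1} \<union> {u..N} = {last is + 1..N}" using right(1,2) by auto
    ultimately show ?thesis by simp
  qed
  then have "condI N B'" unfolding condI_def istar_eq[OF ok'] using cov0_mono[OF sub left] by simp
  ultimately show "insert {u, N} B \<in> XN1 N" unfolding XN1_iff B'_def by blast
qed

lemma XN2p_extension:
  assumes "odd N" "B \<in> XN2p N" "B0 B \<noteq> {}"
  shows "uB N B < N" "N \<notin> supp B" "insert {uB N B, N} B \<in> XN1 N"
proof -
  have st: "starP N B" and c: "condII N B" using assms(2) unfolding XN2p_def by auto
  then have pn: "PN N B" and nest: "nested B" unfolding starP_iff by auto
  define ist where "ist = istar N B"
  have ok: "seq_ok N B ist" unfolding ist_def using seq_ok_istar[OF st] .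
  have "sB N B \<noteq> 0" using sB_eq_0_iff[OF st] assms(3) by simp
  then have ne: "ist \<noteq> []" and N: "N \<notin> supp B" and cases: "caseI N B \<or> caseII N B"
    using c unfolding condII_def ist_def by auto
  show "N \<notin> supp B" by (rule N)
  have "uB N B < N \<and> insert {uB N B, N} B \<in> XN1 N"
  proof (cases "caseI N B")
    case True
    then have cov: "cov1 B {1..hd ist - 1}" "cov0 B {last ist + 1..N - 1}"
      unfolding caseI_def ist_def by auto
    have "uB N B = (THE u. split_point B 1 (hd ist - 1) u)"
      using True unfolding uB_def split_point_def ist_def by simp
    then have "split_point B 1 (hd ist - 1) (uB N B)"
      using split_point_the[OF pn nest cov(1) order_refl caseI_split_point_notin_supp[OF pn nest ok ne]]
      by simp
    then show ?thesis using caseI_extension[OF assms(1) pn nest ok ne N _ cov(2)] by blast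
  next
    case False
    then have cov: "cov0 B {1..hd ist - 1}" "cov1 B {last ist + 1..N - 1}"
      using cases unfolding caseII_def ist_def by auto
    have "uB N B = (THE u. split_point B (last ist + 1) (N - 1) u)"
      using False unfolding uB_def split_point_def ist_def by simp
    then have "split_point B (last ist + 1) (N - 1) (uB N B)"
      using split_point_the[OF pn nest cov(2) _ caseII_split_point_notin_supp[OF pn nest ok ne N]]
      by simp
    then show ?thesis using caseII_extension[OF assms(1) pn nest ok ne N cov(1)] by blast
  qed
  then show "uB N B < N" "insert {uB N B, N} B \<in> XN1 N" by auto
qed

lemma phi_in_XN1:
  assumes "odd N" "B \<in> XN2 N"
  shows "phi N B \<in> XN1 N"
proof (cases "B \<in> XN2m N \<or> card (B0 B) = 0")
  case True
  have st: "starP N B" using assms(2) unfolding XN2_def XN2p_def XN2m_def by auto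
  from True have "B \<in> XN1 N"
  proof
    assume "B \<in> XN2m N"
    then show ?thesis unfolding XN2m_def XN1_def condIII_def by auto
  next
    assume "card (B0 B) = 0"
    then have "sB N B = 0"
      using sB_eq_0_iff[OF st] card_B0_eq_0_iff st unfolding starP_def by blast
    then show ?thesis using st unfolding XN1_def condI_def by auto
  qed
  then show ?thesis using True unfolding phi_def by simp
next
  case False
  then have "B \<in> XN2p N" "B0 B \<noteq> {}" using assms(2) unfolding XN2_def by auto
  then show ?thesis using False XN2p_extension(3)[OF assms(1)] unfolding phi_def by simp
qed

lemma brk_pair_N:
  assumes "odd N" "u < N"
  shows "brk N {u, N} = (if even u then {u..N} else {N} \<union> {1..u})"
  using assms unfolding brk_def by auto

lemma eps_phi:
  assumes "odd N" "B \<in> XN2 N"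
  shows "eps N (phi N B) = eps' N B"
proof (cases "B \<in> XN2m N \<or> card (B0 B) = 0")
  case True
  then show ?thesis unfolding phi_def eps'_def by simp
next
  case False
  then have Bp: "B \<in> XN2p N" "B0 B \<noteq> {}" using assms(2) unfolding XN2_def by auto
  define u where "u = uB N B"
  have u: "u < N" "N \<notin> supp B" using XN2p_extension(1,2)[OF assms(1) Bp] unfolding u_def by auto
  have "finite B" using Bp(1) PN_finite unfolding XN2p_def starP_def by blast
  moreover have "{u, N} \<notin> B" using u(2) unfolding supp_def by blast
  ultimately have "eps N (phi N B) = sdiff2 (eps N B) (brk N {u, N})"
    using False fsum2_insert unfolding phi_def eps_def u_def by simp
  also have "\<dots> = eps' N B"
    using False u(1) unfolding brk_pair_N[OF assms(1) u(1)] eps'_def u_def[symmetric]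
    by (auto simp: sdiff2_def)
  finally show ?thesis .
qed

lemma subset_phi: "B \<subseteq> phi N B"
  unfolding phi_def by auto

theorem mainTheorem3:
  fixes N :: nat and B B' :: "nat set set"
  assumes "odd N" and "N \<ge> 3"
    and "B' \<in> XN2 N" and "B \<in> XN2 N"
    and "preceq N B' B"
  shows "leq1 N (phi N B') (phi N B)"
  \<comment> \<open>only the oddness of N is needed\<close>
proof -
  let ?R = "\<lambda>X Y. X \<in> XN2 N \<and> Y \<in> XN2 N \<and> eps' N X \<in> span2 Y"
  let ?S = "\<lambda>X Y. X \<in> XN1 N \<and> Y \<in> XN1 N \<and> eps N X \<in> span2 Y"
  have "?S (phi N X) (phi N Y)" if "?R X Y" for X Y
    using that phi_in_XN1[OF assms(1)] eps_phi[OF assms(1)] span2_mono[OF subset_phi, of Y N]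
    by auto
  then show ?thesis
    using rtranclp_map[of ?R ?S "phi N"] assms(5) unfolding preceq_def leq1_def by blast
qed

end
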